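(* Let $n\ge1$, $\delta>0$, $N$ a multiple of $n$, $L=N/n$, $q_n=\frac{n\delta+\sqrt{n^2\delta^2+4n\delta}}2$, $\zeta=(\delta n+4)/(\delta n)$, $\rho=\frac{\sqrt\zeta-1}{\sqrt\zeta+1}$. Let $H\in\mathbb R^{N\times N}$ be the block tridiagonal matrix with $L\times L$ blocks of size $n\times n$, diagonal blocks $(\delta n+2)I_n$ except the last, which is $(q_n+1)I_n$, and blocks $-I_n$ on the first super- and sub-block-diagonals. Then $H$ is invertible and $Y=H^{-1}$ has the block form $Y=(y_{ij}I_n)_{i,j=1}^{L}$ with scalars $y_{ij}$ satisfying $$y_{t,t+\tau}\ge\frac{1-\rho}{\delta n+2}\rho^{\tau}>0\quad\text{for all }1\le t\le t+\tau\le L,\ \tau\ge0.$$ *)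

theory Defs
  imports Complex_Main "Jordan_Normal_Form.Matrix"
begin

definition q_n :: "nat \<Rightarrow> real \<Rightarrow> real" where
  "q_n n \<delta> = (real n * \<delta> + sqrt ((real n)^2 * \<delta>^2 + 4 * real n * \<delta>)) / 2"

definition zeta :: "nat \<Rightarrow> real \<Rightarrow> real" where
  "zeta n \<delta> = (\<delta> * real n + 4) / (\<delta> * real n)"

definition rho :: "nat \<Rightarrow> real \<Rightarrow> real" where
  "rho n \<delta> = (sqrt (zeta n \<delta>) - 1) / (sqrt (zeta n \<delta>) + 1)"

text \<open>Block tridiagonal matrix of size N = n*L, with L x L blocks of size n x n
  (0-indexed: entry (a,b) lies in block (a div n, b div n) at position (a mod n, b mod n)).\<close>
definition H_mat :: "nat \<Rightarrow> nat \<Rightarrow> real \<Rightarrow> real mat" where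
  "H_mat n L \<delta> = mat (n * L) (n * L) (\<lambda>(a, b).
     (let i = a div n; j = b div n in
      if a mod n \<noteq> b mod n then 0
      else if i = j then (if i = L - 1 then q_n n \<delta> + 1 else \<delta> * real n + 2)
      else if i = j + 1 \<or> j = i + 1 then -1
      else 0))"

end

theory Submission
  imports Defs "Jordan_Normal_Form.Determinant"
begin

text \<open>
  With \<open>p = \<rho>\<close> one has \<open>D = \<delta> n + 2 = p + 1/p\<close> and \<open>q\<^sub>n + 1 = 1/p\<close>, and \<open>H\<close> is the scalar
  \<open>L \<times> L\<close> tridiagonal matrix \<open>T\<close> with these diagonal entries tensored with \<open>I\<^sub>n\<close>, so it suffices
  to invert \<open>T\<close>. Its inverse is the Green's function \<open>y i j = u (min i j) * v (max i j)\<close>, where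
  \<open>u = U(D/2)\<close> solves the three-term recurrence with the boundary condition of the first row,
  \<open>v i = p ^ (i + 1)\<close> solves it with that of the last row (the last diagonal entry
  \<open>1/p = D - p\<close> is exactly what a geometric solution needs), and their Wronskian is \<open>1\<close>.
  The same Wronskian identity gives \<open>p ^ (t + 1) * U t \<ge> p\<close>, hence
  \<open>y t (t + \<tau>) \<ge> p ^ (\<tau> + 1) \<ge> (1 - p) / (\<delta> n + 2) * p ^ \<tau>\<close>.
\<close>

lemma sum_lessThan_mult_split:
  fixes n L :: nat
  shows "(\<Sum>c<n * L. f c) = (\<Sum>k<L. \<Sum>m<n. f (k * n + m))"
proof -
  have "(\<Sum>c\<in>{k * n..<k * n + n}. f c) = (\<Sum>m<n. f (k * n + m))" for k
    using sum.shift_bounds_nat_ivl[of f 0 "k * n" n] by (simp add: atLeast0LessThan add.commute)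
  then show ?thesis
    using sum.nat_group[where g = f and k = n and n = L] by (simp add: mult.commute)
qed

definition scalar_blocks_mat :: "nat \<Rightarrow> nat \<Rightarrow> (nat \<Rightarrow> nat \<Rightarrow> 'a :: zero) \<Rightarrow> 'a mat" where
  "scalar_blocks_mat n L f = mat (n * L) (n * L)
     (\<lambda>(a, b). if a mod n = b mod n then f (a div n) (b div n) else 0)"

lemma scalar_blocks_mat_carrier: "scalar_blocks_mat n L f \<in> carrier_mat (n * L) (n * L)"
  by (simp add: scalar_blocks_mat_def)

lemma index_scalar_blocks_mat:
  "a < n * L \<Longrightarrow> b < n * L \<Longrightarrow>
   scalar_blocks_mat n L f $$ (a, b) = (if a mod n = b mod n then f (a div n) (b div n) else 0)"
  by (simp add: scalar_blocks_mat_def)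

lemma scalar_blocks_mat_cong:
  assumes "\<And>i j. i < L \<Longrightarrow> j < L \<Longrightarrow> f i j = g i j"
  shows "scalar_blocks_mat n L f = scalar_blocks_mat n L g"
  using assms less_mult_imp_div_less[of _ L n]
  by (auto simp: scalar_blocks_mat_def mult.commute intro!: cong_mat)

lemma scalar_blocks_mat_one: "scalar_blocks_mat n L (\<lambda>i j. if i = j then 1 else 0) = 1\<^sub>m (n * L)"
proof (rule eq_matI)
  fix a b assume "a < dim_row (1\<^sub>m (n * L))" "b < dim_col (1\<^sub>m (n * L))"
  moreover have "a mod n = b mod n \<and> a div n = b div n \<longleftrightarrow> a = b"
    by (metis div_mult_mod_eq)
  ultimately show "scalar_blocks_mat n L (\<lambda>i j. if i = j then 1 else 0) $$ (a, b) = 1\<^sub>m (n * L) $$ (a, b)"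
    by (auto simp: index_scalar_blocks_mat)
qed (simp_all add: scalar_blocks_mat_def)

lemma scalar_blocks_mat_mult:
  fixes f g :: "nat \<Rightarrow> nat \<Rightarrow> 'a :: semiring_0"
  shows "scalar_blocks_mat n L f * scalar_blocks_mat n L g
       = scalar_blocks_mat n L (\<lambda>i j. \<Sum>k<L. f i k * g k j)"
proof (rule eq_matI)
  fix a b assume "a < dim_row (scalar_blocks_mat n L (\<lambda>i j. \<Sum>k<L. f i k * g k j))"
    and "b < dim_col (scalar_blocks_mat n L (\<lambda>i j. \<Sum>k<L. f i k * g k j))"
  then have a: "a < n * L" and b: "b < n * L" by (simp_all add: scalar_blocks_mat_def)
  then have n: "0 < n" by (cases n) auto
  have "(scalar_blocks_mat n L f * scalar_blocks_mat n L g) $$ (a, b)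
      = (\<Sum>c<n * L. scalar_blocks_mat n L f $$ (a, c) * scalar_blocks_mat n L g $$ (c, b))"
    using a b by (simp add: scalar_blocks_mat_def scalar_prod_def lessThan_atLeast0)
  also have "\<dots> = (\<Sum>k<L. \<Sum>m<n. scalar_blocks_mat n L f $$ (a, k * n + m) * scalar_blocks_mat n L g $$ (k * n + m, b))"
    by (rule sum_lessThan_mult_split)
  also have "\<dots> = (\<Sum>k<L. \<Sum>m<n. if m = a mod n then
                      (if a mod n = b mod n then f (a div n) k * g k (b div n) else 0) else 0)"
  proof (intro sum.cong refl)
    fix k m assume "k \<in> {..<L}" "m \<in> {..<n}"
    then have "k * n + m < n * L" and "(k * n + m) div n = k" and "(k * n + m) mod n = m"
      using mult_le_mono1[of "Suc k" L n] by (auto simp: mult.commute)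
    then show "scalar_blocks_mat n L f $$ (a, k * n + m) * scalar_blocks_mat n L g $$ (k * n + m, b)
      = (if m = a mod n then (if a mod n = b mod n then f (a div n) k * g k (b div n) else 0) else 0)"
      using a b by (auto simp: index_scalar_blocks_mat)
  qed
  also have "\<dots> = scalar_blocks_mat n L (\<lambda>i j. \<Sum>k<L. f i k * g k j) $$ (a, b)"
    using a b n by (simp add: index_scalar_blocks_mat sum.delta)
  finally show "(scalar_blocks_mat n L f * scalar_blocks_mat n L g) $$ (a, b)
      = scalar_blocks_mat n L (\<lambda>i j. \<Sum>k<L. f i k * g k j) $$ (a, b)" .
qed (simp_all add: scalar_blocks_mat_def)

definition tridiag :: "nat \<Rightarrow> 'a \<Rightarrow> 'a \<Rightarrow> nat \<Rightarrow> nat \<Rightarrow> 'a :: ring_1" where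
  "tridiag L D E i k =
     (if i = k then (if i = L - 1 then E else D) else if i = k + 1 \<or> k = i + 1 then -1 else 0)"

lemma sum_tridiag_mult:
  fixes x :: "nat \<Rightarrow> 'a :: ring_1"
  assumes "i < L"
  shows "(\<Sum>k<L. tridiag L D E i k * x k)
       = (if 0 < i then - x (i - 1) else 0) + (if i = L - 1 then E else D) * x i
         - (if i + 1 < L then x (i + 1) else 0)"
proof -
  have "tridiag L D E i k * x k
      = (if k = i then (if i = L - 1 then E else D) * x i else 0)
        + (if k = i - 1 then (if 0 < i then - x k else 0) else 0) - (if k = i + 1 then x k else 0)" for k
    by (auto simp: tridiag_def)
  then show ?thesis
    using assms by (auto simp: sum.distrib sum_subtractf sum.delta)
qed

definition green :: "(nat \<Rightarrow> 'a) \<Rightarrow> (nat \<Rightarrow> 'a) \<Rightarrow> nat \<Rightarrow> nat \<Rightarrow> 'a :: times" where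
  "green u v i j = u (min i j) * v (max i j)"

lemma wronskian_const:
  fixes u v :: "nat \<Rightarrow> 'a :: comm_ring"
  assumes u_rec: "\<And>i. u (Suc (Suc i)) = D * u (Suc i) - u i"
    and v_rec: "\<And>i. v (Suc (Suc i)) = D * v (Suc i) - v i"
  shows "u (i + 1) * v i - u i * v (i + 1) = u 1 * v 0 - u 0 * v 1"
proof (induction i)
  case (Suc i)
  have "u (Suc (Suc i)) * v (Suc i) - u (Suc i) * v (Suc (Suc i)) = u (Suc i) * v i - u i * v (Suc i)"
    unfolding u_rec v_rec by (simp add: algebra_simps)
  with Suc show ?case by simp
qed simp

lemma green_row:
  fixes u v :: "nat \<Rightarrow> 'a :: comm_ring_1"
  assumes u_start: "u (Suc 0) = D * u 0"
    and u_rec: "\<And>i. u (Suc (Suc i)) = D * u (Suc i) - u i"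
    and v_rec: "\<And>i. v (Suc (Suc i)) = D * v (Suc i) - v i"
    and wronskian: "u 1 * v 0 - u 0 * v 1 = 1"
  shows "(if 0 < i then - green u v (i - 1) j else 0) + D * green u v i j - green u v (i + 1) j
       = (if i = j then 1 else 0)"
proof -
  have W: "u (Suc k) * v k - u k * v (Suc k) = 1" for k
    using wronskian_const[of u D v k] u_rec v_rec wronskian by simp
  consider "i < j" | "i = j" | "j < i" by linarith
  then show ?thesis
  proof cases
    case 1
    then show ?thesis
    proof (cases i)
      case (Suc i')
      with 1 show ?thesis by (simp add: green_def u_rec algebra_simps)
    qed (simp add: green_def u_start)
  next
    case 2
    then show ?thesis
    proof (cases i)
      case (Suc i')
      with 2 have "j = Suc i'" by simp
      with Suc show ?thesis using W[of i] by (simp add: green_def u_rec algebra_simps)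
    qed (use W[of 0] in \<open>simp add: green_def u_start algebra_simps\<close>)
  next
    case 3
    then obtain i' where "i = i' + 1" by (cases i) auto
    with 3 show ?thesis by (simp add: green_def v_rec algebra_simps)
  qed
qed

lemma sum_tridiag_mult_green:
  fixes u v :: "nat \<Rightarrow> 'a :: comm_ring_1"
  assumes u_start: "u (Suc 0) = D * u 0"
    and u_rec: "\<And>i. u (Suc (Suc i)) = D * u (Suc i) - u i"
    and v_rec: "\<And>i. v (Suc (Suc i)) = D * v (Suc i) - v i"
    and wronskian: "u 1 * v 0 - u 0 * v 1 = 1"
    and v_last: "0 < L \<Longrightarrow> v L = (D - E) * v (L - 1)"
    and ij: "i < L" "j < L"
  shows "(\<Sum>k<L. tridiag L D E i k * green u v k j) = (if i = j then 1 else 0)"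
proof (cases "i + 1 < L")
  case True
  then have "i \<noteq> L - 1" by simp
  with True show ?thesis
    unfolding sum_tridiag_mult[OF ij(1)] using green_row[OF u_start u_rec v_rec wronskian, of i j] by simp
next
  case False
  with ij have L: "L = Suc i" by simp
  have "j \<le> i" using ij L by simp
  then have "green u v (Suc i) j = (D - E) * green u v i j"
    using v_last unfolding L green_def by (simp add: min_absorb2 max_absorb1)
  then have E: "E * green u v i j = D * green u v i j - green u v (i + 1) j"
    by (simp add: algebra_simps)
  have "(\<Sum>k<L. tridiag L D E i k * green u v k j)
      = (if 0 < i then - green u v (i - 1) j else 0) + E * green u v i j"
    unfolding sum_tridiag_mult[OF ij(1)] using L by simp
  also have "\<dots> = (if 0 < i then - green u v (i - 1) j else 0) + D * green u v i j - green u v (i + 1) j"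
    unfolding E by (rule add_diff_eq)
  also have "\<dots> = (if i = j then 1 else 0)"
    by (rule green_row[OF u_start u_rec v_rec wronskian])
  finally show ?thesis .
qed

lemma H_mat_eq_scalar_blocks_tridiag:
  "H_mat n L \<delta> = scalar_blocks_mat n L (tridiag L (\<delta> * real n + 2) (q_n n \<delta> + 1))"
  unfolding H_mat_def scalar_blocks_mat_def tridiag_def by (intro cong_mat) (auto simp: Let_def)

text \<open>\<open>chebyshev_U D i\<close> is the Chebyshev polynomial of the second kind \<open>U\<^sub>i\<close> evaluated at \<open>D / 2\<close>.\<close>
fun chebyshev_U :: "'a :: comm_ring_1 \<Rightarrow> nat \<Rightarrow> 'a" where
  "chebyshev_U D 0 = 1"
| "chebyshev_U D (Suc 0) = D"
| "chebyshev_U D (Suc (Suc i)) = D * chebyshev_U D (Suc i) - chebyshev_U D i"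

lemma power_Suc_Suc_recurrence:
  fixes p :: "'a :: field"
  assumes "p \<noteq> 0"
  shows "p ^ Suc (Suc (Suc i)) = (p + 1 / p) * p ^ Suc (Suc i) - p ^ Suc i"
  using assms by (simp add: field_simps)

lemma chebyshev_power_wronskian:
  fixes p :: "'a :: field"
  assumes "p \<noteq> 0"
  shows "chebyshev_U (p + 1 / p) (Suc i) * p ^ Suc i - chebyshev_U (p + 1 / p) i * p ^ Suc (Suc i) = 1"
  using wronskian_const[of "chebyshev_U (p + 1 / p)" "p + 1 / p" "\<lambda>i. p ^ Suc i" i]
    power_Suc_Suc_recurrence[OF assms] assms
  by (simp add: field_simps power2_eq_square)

lemma sum_tridiag_mult_green_chebyshev:
  fixes p :: "'a :: field"
  assumes "p \<noteq> 0" and "i < L" and "j < L"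
  shows "(\<Sum>k<L. tridiag L (p + 1 / p) (1 / p) i k * green (chebyshev_U (p + 1 / p)) (\<lambda>i. p ^ Suc i) k j)
       = (if i = j then 1 else 0)"
proof (rule sum_tridiag_mult_green)
  show "chebyshev_U (p + 1 / p) 1 * p ^ Suc 0 - chebyshev_U (p + 1 / p) 0 * p ^ Suc 1 = 1"
    using chebyshev_power_wronskian[OF assms(1), of 0] by simp
  show "0 < L \<Longrightarrow> p ^ Suc L = (p + 1 / p - 1 / p) * p ^ Suc (L - 1)"
    by simp
qed (use assms power_Suc_Suc_recurrence in auto)

lemma chebyshev_U_power_lower_bound:
  fixes p :: real
  assumes "0 < p"
  shows "p \<le> p ^ Suc t * chebyshev_U (p + 1 / p) t"
proof (induction t)
  case (Suc t)
  have "p ^ Suc (Suc t) * chebyshev_U (p + 1 / p) (Suc t)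
      = p + p\<^sup>2 * (p ^ Suc t * chebyshev_U (p + 1 / p) t)"
    using chebyshev_power_wronskian[of p t] assms by (simp add: algebra_simps power2_eq_square)
  also have "\<dots> \<ge> p"
  proof -
    have "0 \<le> p ^ Suc t * chebyshev_U (p + 1 / p) t"
      using Suc.IH assms by linarith
    then show ?thesis
      using mult_nonneg_nonneg[OF zero_le_power2[of p]] by auto
  qed
  finally show ?case .
qed (use assms in simp)

lemma sqrt_zeta:
  assumes "n \<ge> 1" and "\<delta> > 0"
  shows "1 < sqrt (zeta n \<delta>)" and "\<delta> * real n * (sqrt (zeta n \<delta>))\<^sup>2 = \<delta> * real n + 4"
  using assms by (simp_all add: zeta_def)

lemma rho_pos:
  assumes "n \<ge> 1" and "\<delta> > 0"
  shows "0 < rho n \<delta>"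
  using sqrt_zeta(1)[OF assms] unfolding rho_def by (intro divide_pos_pos) linarith+

lemma rho_less_one:
  assumes "n \<ge> 1" and "\<delta> > 0"
  shows "rho n \<delta> < 1"
  using sqrt_zeta(1)[OF assms] unfolding rho_def by (subst divide_less_eq_1_pos) linarith+

lemma rho_plus_inverse_rho:
  assumes "n \<ge> 1" and "\<delta> > 0"
  shows "rho n \<delta> + 1 / rho n \<delta> = \<delta> * real n + 2"
proof -
  define s r where "s = \<delta> * real n" and "r = sqrt (zeta n \<delta>)"
  have s: "0 < s" and r: "1 < r" and sr: "s * r\<^sup>2 = s + 4"
    using sqrt_zeta[OF assms] assms unfolding s_def r_def by simp_all
  have "rho n \<delta> + 1 / rho n \<delta> = 2 * (r\<^sup>2 + 1) / (r\<^sup>2 - 1)"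
    unfolding rho_def r_def[symmetric] using r by (simp add: field_simps power2_eq_square)
  also have "\<dots> = s + 2"
  proof -
    have "r\<^sup>2 - 1 = 4 / s" and "r\<^sup>2 + 1 = (2 * s + 4) / s"
      using sr s by (simp_all add: field_simps)
    then show ?thesis
      using s by (simp only:) (simp add: field_simps)
  qed
  finally show ?thesis unfolding s_def .
qed

lemma q_n_plus_one:
  assumes "n \<ge> 1" and "\<delta> > 0"
  shows "q_n n \<delta> + 1 = 1 / rho n \<delta>"
proof -
  define s r where "s = \<delta> * real n" and "r = sqrt (zeta n \<delta>)"
  have s: "0 < s" and r: "1 < r" and sr: "s * r\<^sup>2 = s + 4"
    using sqrt_zeta[OF assms] assms unfolding s_def r_def by simp_all
  have "(s * r)\<^sup>2 = s * (s * r\<^sup>2)"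
    by (simp add: power2_eq_square)
  also have "\<dots> = (real n)\<^sup>2 * \<delta>\<^sup>2 + 4 * real n * \<delta>"
    unfolding sr by (simp add: s_def algebra_simps power2_eq_square)
  finally have "(real n)\<^sup>2 * \<delta>\<^sup>2 + 4 * real n * \<delta> = (s * r)\<^sup>2" ..
  then have "q_n n \<delta> + 1 = (s + s * r + 2) / 2"
    using s r by (simp add: q_n_def s_def mult.commute add_divide_distrib)
  also have "\<dots> = (r + 1) / (r - 1)"
  proof -
    have "(s + s * r + 2) * (r - 1) = 2 * (r + 1)"
      using sr by (simp add: algebra_simps power2_eq_square)
    then show ?thesis
      using r by (simp add: divide_eq_eq eq_divide_eq)
  qed
  also have "\<dots> = 1 / rho n \<delta>"
    unfolding rho_def r_def by simp
  finally show ?thesis .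
qed

lemma green_chebyshev_lower_bound:
  fixes p :: real
  assumes "0 < p"
  shows "p ^ Suc \<tau> \<le> green (chebyshev_U (p + 1 / p)) (\<lambda>i. p ^ Suc i) t (t + \<tau>)"
proof -
  have "p ^ \<tau> * p \<le> p ^ \<tau> * (p ^ Suc t * chebyshev_U (p + 1 / p) t)"
    using chebyshev_U_power_lower_bound[OF assms] assms by (intro mult_left_mono) simp_all
  then show ?thesis
    by (simp add: green_def power_add algebra_simps)
qed

lemma one_minus_div_plus_inverse_le:
  fixes p :: real
  assumes "0 < p"
  shows "(1 - p) / (p + 1 / p) \<le> p"
proof -
  have "(1 - p) / (p + 1 / p) = p * (1 - p) / (p\<^sup>2 + 1)"
    using assms by (simp add: field_simps power2_eq_square)
  also have "\<dots> \<le> p"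
  proof -
    have "p * (1 - p) \<le> p * (p\<^sup>2 + 1)"
      using assms zero_le_power2[of p] by (intro mult_left_mono) linarith+
    then show ?thesis
      by (subst pos_divide_le_eq) (simp_all add: add_nonneg_pos)
  qed
  finally show ?thesis .
qed

theorem lemma11:
  fixes n L :: nat and \<delta> :: real
  assumes "n \<ge> 1" and "\<delta> > 0"
  defines "N \<equiv> n * L"
  shows "invertible_mat (H_mat n L \<delta>) \<and>
    (\<exists>Y y. Y \<in> carrier_mat N N \<and> H_mat n L \<delta> * Y = 1\<^sub>m N \<and> Y * H_mat n L \<delta> = 1\<^sub>m N \<and>
       (\<forall>a<N. \<forall>b<N. Y $$ (a, b) = (if a mod n = b mod n then y (a div n) (b div n) else 0)) \<and>
       (\<forall>t \<tau>. t + \<tau> < L \<longrightarrow>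
          y t (t + \<tau>) \<ge> (1 - rho n \<delta>) / (\<delta> * real n + 2) * rho n \<delta> ^ \<tau> \<and>
          (1 - rho n \<delta>) / (\<delta> * real n + 2) * rho n \<delta> ^ \<tau> > 0))"
proof -
  define p where "p = rho n \<delta>"
  have p: "0 < p" "p < 1"
    unfolding p_def using rho_pos[OF assms(1,2)] rho_less_one[OF assms(1,2)] by simp_all
  have D: "\<delta> * real n + 2 = p + 1 / p"
    unfolding p_def by (rule rho_plus_inverse_rho[OF assms(1,2), symmetric])
  define y where "y = green (chebyshev_U (p + 1 / p)) (\<lambda>i. p ^ Suc i)"
  define Y where "Y = scalar_blocks_mat n L y"
  have H: "H_mat n L \<delta> = scalar_blocks_mat n L (tridiag L (p + 1 / p) (1 / p))"
    unfolding H_mat_eq_scalar_blocks_tridiag D q_n_plus_one[OF assms(1,2)] p_def ..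
  have Y: "Y \<in> carrier_mat N N"
    unfolding Y_def N_def by (rule scalar_blocks_mat_carrier)
  have HY: "H_mat n L \<delta> * Y = 1\<^sub>m N"
    unfolding H Y_def y_def scalar_blocks_mat_mult N_def scalar_blocks_mat_one[symmetric]
    using p(1) by (intro scalar_blocks_mat_cong sum_tridiag_mult_green_chebyshev) simp_all
  have Hc: "H_mat n L \<delta> \<in> carrier_mat N N"
    unfolding H N_def by (rule scalar_blocks_mat_carrier)
  have YH: "Y * H_mat n L \<delta> = 1\<^sub>m N"
    by (rule mat_mult_left_right_inverse[OF Hc Y HY])
  have "(1 - p) / (p + 1 / p) * p ^ \<tau> \<le> y t (t + \<tau>)" for t \<tau>
  proof -
    have "(1 - p) / (p + 1 / p) * p ^ \<tau> \<le> p ^ Suc \<tau>"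
      using mult_right_mono[OF one_minus_div_plus_inverse_le[OF p(1)], of "p ^ \<tau>"] p(1) by simp
    also have "\<dots> \<le> y t (t + \<tau>)"
      unfolding y_def by (rule green_chebyshev_lower_bound[OF p(1)])
    finally show ?thesis .
  qed
  moreover have "(1 - p) / (p + 1 / p) * p ^ \<tau> > 0" for \<tau>
    using p by (simp add: add_pos_pos)
  moreover have "invertible_mat (H_mat n L \<delta>)"
    unfolding invertible_mat_def inverts_mat_def using Hc Y HY YH by auto
  ultimately show ?thesis
    using Y HY YH unfolding D[symmetric] p_def[symmetric]
    by (intro conjI exI[of _ Y] exI[of _ y]) (auto simp: Y_def N_def index_scalar_blocks_mat)
qed

end
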